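(* For every connected finite simple graph $\Gamma$ on vertex set $[n]$, $n\ge1$, $$F_\Gamma=\sum_{i\in[n]}\big(F_{\Gamma\setminus\{i\}}\big)_1,$$ where $\Gamma\setminus\{i\}$ is the induced subgraph on $[n]\setminus\{i\}$.
   Context: For a coloring $\lambda:V\to\mathbb{N}=\{1,2,\dots\}$ of a finite simple graph $\Gamma$ with values $i_1<\dots<i_k$, let $I_j=\lambda^{-1}(\{i_1,\dots,i_j\})$, $I_0=\emptyset$. It is ordered if for each $j$, no two distinct vertices $u,w$ with $\lambda(u)=\lambda(w)=i_j$ are joined by a path in $\Gamma$ (possibly a single edge) all of whose internal vertices lie in $I_{j-1}$. $F_\Gamma=\sum_{\lambda\text{ ordered}}\prod_{v\in V}x_{\lambda(v)}$, with $F_\Gamma=1$ for the graph with no vertices (it equals the lattice point enumerator of the graph-associahedron of $\Gamma$). For a composition $\alpha=(a_1,\dots,a_k)$, $M_\alpha=\sum_{i_1<\dots<i_k}x_{i_1}^{a_1}\cdots x_{i_k}^{a_k}$, $M_{()}=1$. The shifting operator $G\mapsto(G)_1$ on quasisymmetric functions is the linear map with $(M_{(a_1,\dots,a_k)})_1=M_{(a_1,\dots,a_k,1)}$. *)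

theory Defs
  imports Main
begin

text \<open>Formal power series in the variables x_1, x_2, ... with integer coefficients,
  represented by their coefficient function on monomials.  A monomial is an exponent
  vector m :: nat \<Rightarrow> nat (m i = exponent of x_i; only finitely supported m with
  m 0 = 0 are genuine monomials, all other coefficients are 0).\<close>

type_synonym qseries = "(nat \<Rightarrow> nat) \<Rightarrow> int"

definition simple_graph :: "nat set \<Rightarrow> (nat \<Rightarrow> nat \<Rightarrow> bool) \<Rightarrow> bool" where
  "simple_graph V E \<longleftrightarrow> finite V \<and>
     (\<forall>u v. E u v \<longrightarrow> u \<in> V \<and> v \<in> V \<and> u \<noteq> v \<and> E v u)"

definition induced :: "(nat \<Rightarrow> nat \<Rightarrow> bool) \<Rightarrow> nat set \<Rightarrow> nat \<Rightarrow> nat \<Rightarrow> bool" where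
  "induced E S = (\<lambda>u v. E u v \<and> u \<in> S \<and> v \<in> S)"

definition is_walk :: "(nat \<Rightarrow> nat \<Rightarrow> bool) \<Rightarrow> nat list \<Rightarrow> bool" where
  "is_walk E xs \<longleftrightarrow> (\<forall>i. Suc i < length xs \<longrightarrow> E (xs ! i) (xs ! Suc i))"

definition connected_graph :: "nat set \<Rightarrow> (nat \<Rightarrow> nat \<Rightarrow> bool) \<Rightarrow> bool" where
  "connected_graph V E \<longleftrightarrow>
     (\<forall>u\<in>V. \<forall>w\<in>V. \<exists>xs. xs \<noteq> [] \<and> hd xs = u \<and> last xs = w \<and> set xs \<subseteq> V \<and> is_walk E xs)"

definition path_through :: "(nat \<Rightarrow> nat \<Rightarrow> bool) \<Rightarrow> nat set \<Rightarrow> nat \<Rightarrow> nat \<Rightarrow> bool" where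
  "path_through E S u w \<longleftrightarrow>
     (\<exists>ps. set ps \<subseteq> S \<and> distinct (u # ps @ [w]) \<and> is_walk E (u # ps @ [w]))"

text \<open>Ordered colorings \<lambda> : V \<rightarrow> {1,2,...}; \<lambda> is normalised to 0 outside V.
  I_{j-1} is the set of vertices of colour smaller than i_j.\<close>
definition ordered_coloring :: "nat set \<Rightarrow> (nat \<Rightarrow> nat \<Rightarrow> bool) \<Rightarrow> (nat \<Rightarrow> nat) \<Rightarrow> bool" where
  "ordered_coloring V E col \<longleftrightarrow>
     (\<forall>v. v \<notin> V \<longrightarrow> col v = 0) \<and> (\<forall>v\<in>V. col v \<ge> 1) \<and>
     (\<forall>u\<in>V. \<forall>w\<in>V. u \<noteq> w \<and> col u = col w \<longrightarrow>
        \<not> path_through E {v\<in>V. col v < col u} u w)"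

definition F_graph :: "nat set \<Rightarrow> (nat \<Rightarrow> nat \<Rightarrow> bool) \<Rightarrow> qseries" where
  "F_graph V E m = int (card {col. ordered_coloring V E col \<and>
                                (\<forall>i. m i = card {v\<in>V. col v = i})})"

definition composition :: "nat list \<Rightarrow> bool" where
  "composition \<alpha> \<longleftrightarrow> (\<forall>a\<in>set \<alpha>. a \<ge> 1)"

definition M_qsym :: "nat list \<Rightarrow> qseries" where
  "M_qsym \<alpha> m = int (card {is. length is = length \<alpha> \<and> sorted_wrt (<) is \<and> (\<forall>j\<in>set is. j \<ge> 1) \<and>
        m = (\<lambda>x. \<Sum>j<length \<alpha>. if is ! j = x then \<alpha> ! j else 0)})"

text \<open>The monomial x_1^{a_1} ... x_k^{a_k}; its coefficient in a quasisymmetric G is the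
  coefficient of M_\<alpha> in the expansion of G.\<close>
definition comp_monomial :: "nat list \<Rightarrow> nat \<Rightarrow> nat" where
  "comp_monomial \<alpha> = (\<lambda>x. if 1 \<le> x \<and> x \<le> length \<alpha> then \<alpha> ! (x - 1) else 0)"

text \<open>Shifting operator: linear extension of M_\<alpha> \<mapsto> M_{\<alpha>,1}, i.e.
  (\<Sum>_\<alpha> c_\<alpha> M_\<alpha>)_1 = \<Sum>_\<alpha> c_\<alpha> M_{\<alpha>,1}, computed coefficientwise
  (at each monomial only finitely many (at most one) terms are nonzero).\<close>
definition shift1 :: "qseries \<Rightarrow> qseries" where
  "shift1 G m = (\<Sum>\<alpha> \<in> {\<alpha>. composition \<alpha> \<and> M_qsym (\<alpha> @ [1]) m \<noteq> 0}.
                    G (comp_monomial \<alpha>) * M_qsym (\<alpha> @ [1]) m)"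

end

theory Submission
  imports Defs
begin

(* The proof compares coefficients at a monomial m.
   1. Coefficients of the quasisymmetric functions involved: M_\<beta> is the indicator of
      the monomials with composition \<beta>, so (G)_1 is nonzero only at monomials whose
      composition ends with 1, where it equals the coefficient of G at the composition
      with this last part removed.
   2. F_\<Gamma> is quasisymmetric: relabelling colours order-preservingly is a bijection on
      ordered colourings.
   3. In a connected graph the top colour of an ordered colouring occurs exactly once
      (two such vertices would be joined by a path through smaller colours).
   4. Hence, when m has last exponent 1 at variable c, deleting the unique vertex of
      colour c is a bijection onto the ordered colourings of the vertex-deleted
      subgraphs with content m(c := 0); for all other m both sides vanish. *)

(* A walk is a list whose consecutive entries are adjacent; this is the library
   predicate successively, which comes with good append/cons rules. *)
lemma is_walk_iff_successively: "is_walk E xs \<longleftrightarrow> successively E xs"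
proof (induction E xs rule: successively.induct)
  case (3 E x y xs)
  then show ?case unfolding is_walk_def by (auto simp: nth_Cons split: nat.splits)
qed (auto simp: is_walk_def)

(* Every walk can be shortened to a walk without repeated vertices, with the same
   endpoints and using only vertices of the original walk (cut out closed sub-walks). *)
lemma distinct_walk_exists:
  assumes "is_walk E xs" "xs \<noteq> []"
  shows "\<exists>ys. distinct ys \<and> ys \<noteq> [] \<and> hd ys = hd xs \<and> last ys = last xs \<and>
             set ys \<subseteq> set xs \<and> is_walk E ys"
  using assms
proof (induction "length xs" arbitrary: xs rule: less_induct)
  case less
  show ?case
  proof (cases "distinct xs")
    case True
    with less.prems show ?thesis by blast
  next
    case False
    then obtain as y bs cs where xs: "xs = as @ [y] @ bs @ [y] @ cs"
      using not_distinct_decomp by blast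
    define xs' where "xs' = as @ [y] @ cs"
    have "is_walk E xs'"
      using less.prems(1) unfolding xs xs'_def is_walk_iff_successively
      by (auto simp: successively_append_iff successively_Cons)
    moreover have "length xs' < length xs" "xs' \<noteq> []" "hd xs' = hd xs" "last xs' = last xs"
        "set xs' \<subseteq> set xs"
      unfolding xs xs'_def by (auto simp: hd_append)
    ultimately show ?thesis using less.hyps[of xs'] by fastforce
  qed
qed

lemma path_through_of_walk:
  assumes walk: "is_walk E (u # ys @ [w])" and inner: "set ys \<subseteq> S" and "u \<noteq> w"
  shows "path_through E S u w"
proof -
  obtain zs where zs: "distinct zs" "zs \<noteq> []" "hd zs = u" "last zs = w"
      "set zs \<subseteq> set (u # ys @ [w])" "is_walk E zs"
    using distinct_walk_exists[OF walk] by auto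
  have "length zs \<noteq> 1" using zs \<open>u \<noteq> w\<close> by (cases zs) auto
  then obtain ps where ps: "zs = u # ps @ [w]"
    using zs(2-4) by (cases zs rule: rev_cases) (auto simp: neq_Nil_conv Cons_eq_append_conv)
  have "set ps \<subseteq> S" using zs(1,5) inner unfolding ps by auto
  then show ?thesis unfolding path_through_def using zs(1,6) ps by blast
qed

(* In a connected graph an ordered colouring attains its largest colour at exactly
   one vertex: for two such vertices u \<noteq> w, follow a walk from the last visit of u
   to the first later vertex w' of top colour; the vertices in between have smaller
   colours, so u and w' would be joined by a forbidden path. *)
lemma top_color_unique:
  assumes conn: "connected_graph V E" and ord: "ordered_coloring V E col"
    and u: "u \<in> V" and w: "w \<in> V" and cu: "col u = c" and cw: "col w = c"
    and top: "\<And>v. v \<in> V \<Longrightarrow> col v \<le> c"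
  shows "u = w"
proof (rule ccontr)
  assume "u \<noteq> w"
  obtain xs where xs: "xs \<noteq> []" "hd xs = u" "last xs = w" "set xs \<subseteq> V" "is_walk E xs"
    using conn u w unfolding connected_graph_def by blast
  have "u \<in> set xs" using xs(1,2) hd_in_set by blast
  then obtain as bs where xs_split: "xs = as @ u # bs" and "u \<notin> set bs"
    using split_list_last by metis
  have "w \<in> set bs"
    using xs(3) \<open>u \<noteq> w\<close> unfolding xs_split by (cases bs rule: rev_cases) auto
  then obtain rs w' zs where bs: "bs = rs @ w' # zs" and cw': "col w' = c"
      and below: "\<forall>y\<in>set rs. col y \<noteq> c"
    using cw split_list_first_propE[of bs "\<lambda>y. col y = c"] by metis
  have "is_walk E (u # rs @ [w'])"
    using xs(5) unfolding xs_split bs is_walk_iff_successively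
    by (auto simp: successively_append_iff successively_Cons hd_append split: if_splits)
  moreover have "set rs \<subseteq> {v\<in>V. col v < c}"
    using below top xs(4) unfolding xs_split bs by fastforce
  moreover have "w' \<noteq> u" "w' \<in> V"
    using \<open>u \<notin> set bs\<close> xs(4) unfolding xs_split bs by auto
  ultimately have "path_through E {v\<in>V. col v < col u} u w'"
    using path_through_of_walk cu by metis
  then show False
    using ord u \<open>w' \<in> V\<close> \<open>w' \<noteq> u\<close> cu cw' unfolding ordered_coloring_def by metis
qed

definition is_monomial :: "(nat \<Rightarrow> nat) \<Rightarrow> bool" where
  "is_monomial m \<longleftrightarrow> finite {x. m x \<noteq> 0} \<and> m 0 = 0"

definition exponents :: "(nat \<Rightarrow> nat) \<Rightarrow> nat list" where
  "exponents m = map m (sorted_list_of_set {x. m x \<noteq> 0})"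

definition spread :: "nat list \<Rightarrow> nat list \<Rightarrow> nat \<Rightarrow> nat" where
  "spread js \<beta> = (\<lambda>x. \<Sum>j<length \<beta>. if js ! j = x then \<beta> ! j else 0)"

lemma spread_nth:
  assumes "distinct js" "length \<beta> = length js" "j < length js"
  shows "spread js \<beta> (js ! j) = \<beta> ! j"
proof -
  have "spread js \<beta> (js ! j) = (\<Sum>j'<length \<beta>. if j = j' then \<beta> ! j' else 0)"
    unfolding spread_def using assms by (intro sum.cong) (auto simp: nth_eq_iff_index_eq)
  also have "\<dots> = \<beta> ! j" using assms by simp
  finally show ?thesis .
qed

lemma spread_outside:
  assumes "x \<notin> set js" "length \<beta> = length js"
  shows "spread js \<beta> x = 0"
  unfolding spread_def using assms by (intro sum.neutral) auto

lemma composition_exponents: "composition (exponents m)"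
  unfolding composition_def exponents_def
  by (cases "finite {x. m x \<noteq> 0}") auto

lemma spread_eq_monomial:
  assumes \<beta>: "composition \<beta>" and len: "length js = length \<beta>" and inc: "sorted_wrt (<) js"
    and pos: "\<forall>j\<in>set js. j \<ge> 1" and m: "spread js \<beta> = m"
  shows "is_monomial m \<and> sorted_list_of_set {x. m x \<noteq> 0} = js \<and> exponents m = \<beta>"
proof -
  have dist: "distinct js" using inc strict_sorted_iff by blast
  have m_nth: "m (js ! j) = \<beta> ! j" if "j < length js" for j
    unfolding m[symmetric] using spread_nth[OF dist len[symmetric] that] .
  have "m x \<noteq> 0 \<longleftrightarrow> x \<in> set js" for x
  proof
    assume "x \<in> set js"
    then obtain j where "j < length js" "x = js ! j" by (metis in_set_conv_nth)
    then show "m x \<noteq> 0" using m_nth \<beta> len nth_mem unfolding composition_def by fastforce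
  qed (use spread_outside len m in metis)
  then have supp: "{x. m x \<noteq> 0} = set js" by blast
  have sorted: "sorted_list_of_set {x. m x \<noteq> 0} = js"
    unfolding supp using inc dist by (simp add: sorted_list_of_set.idem_if_sorted_distinct strict_sorted_iff)
  have "is_monomial m" unfolding is_monomial_def using supp pos by fastforce
  moreover have "exponents m = \<beta>"
    unfolding exponents_def sorted using len m_nth by (intro nth_equalityI) auto
  ultimately show ?thesis using sorted by blast
qed

lemma monomial_eq_spread:
  assumes mono: "is_monomial m"
  defines "js \<equiv> sorted_list_of_set {x. m x \<noteq> 0}"
  shows "length js = length (exponents m)" "sorted_wrt (<) js" "\<forall>j\<in>set js. j \<ge> 1"
    "spread js (exponents m) = m"
proof -
  have fin: "finite {x. m x \<noteq> 0}" and m0: "m 0 = 0" using mono unfolding is_monomial_def by auto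
  have set_is: "set js = {x. m x \<noteq> 0}" unfolding js_def using fin by simp
  show "length js = length (exponents m)" "sorted_wrt (<) js" 
    unfolding exponents_def js_def by auto
  show "\<forall>j\<in>set js. j \<ge> 1" using set_is m0 by (auto simp: Suc_le_eq intro: gr0I)
  show "spread js (exponents m) = m"
  proof
    fix x
    show "spread js (exponents m) x = m x"
    proof (cases "x \<in> set js")
      case True
      then obtain j where "j < length js" "x = js ! j" by (metis in_set_conv_nth)
      then show ?thesis using spread_nth[of "js" "exponents m" j]
        unfolding exponents_def js_def by simp
    next
      case False
      then show ?thesis using set_is spread_outside[OF False, of "exponents m"]
        unfolding exponents_def js_def by auto
    qed
  qed
qed

lemma M_qsym_eq:
  assumes "composition \<beta>"
  shows "M_qsym \<beta> m = (if is_monomial m \<and> exponents m = \<beta> then 1 else 0)"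
proof -
  let ?witness = "\<lambda>js. length js = length \<beta> \<and> sorted_wrt (<) js \<and> (\<forall>j\<in>set js. j \<ge> 1) \<and>
                          spread js \<beta> = m"
  have "{js. ?witness js}
      = (if is_monomial m \<and> exponents m = \<beta> then {sorted_list_of_set {x. m x \<noteq> 0}} else {})"
  proof (cases "is_monomial m \<and> exponents m = \<beta>")
    case True
    then have "?witness (sorted_list_of_set {x. m x \<noteq> 0})"
      using monomial_eq_spread[of m] by blast
    moreover have "js = sorted_list_of_set {x. m x \<noteq> 0}" if "?witness js" for "js"
      using spread_eq_monomial[OF assms, of js m] that by blast
    ultimately show ?thesis using True by auto
  next
    case False
    have "\<not> ?witness js" for "js"
      using spread_eq_monomial[OF assms, of js m] False by blast
    then show ?thesis using False by auto
  qed
  then show ?thesis unfolding M_qsym_def spread_def by (simp add: eq_commute[of m])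
qed

lemma shift1_eq:
  "shift1 G m = (if is_monomial m \<and> exponents m \<noteq> [] \<and> last (exponents m) = 1
                 then G (comp_monomial (butlast (exponents m))) else 0)"
proof -
  define e where "e = exponents m"
  have snoc: "composition (\<alpha> @ [1]) \<longleftrightarrow> composition \<alpha>" for \<alpha>
    by (auto simp: composition_def)
  have M: "composition \<alpha> \<Longrightarrow> M_qsym (\<alpha> @ [1]) m = (if is_monomial m \<and> e = \<alpha> @ [1] then 1 else 0)"
    for \<alpha> using M_qsym_eq[of "\<alpha> @ [1]" m] snoc unfolding e_def by simp
  show ?thesis
  proof (cases "is_monomial m \<and> e \<noteq> [] \<and> last e = 1")
    case True
    then have e: "e = butlast e @ [1]" by (metis append_butlast_last_id)
    have comp: "composition (butlast e)"
      using composition_exponents[of m] snoc e unfolding e_def by metis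
    have M1: "M_qsym (butlast e @ [1]) m = 1" using M[OF comp] True e by simp
    have "{\<alpha>. composition \<alpha> \<and> M_qsym (\<alpha> @ [1]) m \<noteq> 0} = {butlast e}"
    proof (intro set_eqI iffI)
      fix \<alpha> assume "\<alpha> \<in> {\<alpha>. composition \<alpha> \<and> M_qsym (\<alpha> @ [1]) m \<noteq> 0}"
      then have "e = \<alpha> @ [1]" using M by (auto split: if_splits)
      then show "\<alpha> \<in> {butlast e}" by simp
    qed (use comp M1 in auto)
    then show ?thesis using True M1 unfolding shift1_def e_def[symmetric] by simp
  next
    case False
    then have "e \<noteq> \<alpha> @ [1] \<or> \<not> is_monomial m" for \<alpha> by auto
    then have "{\<alpha>. composition \<alpha> \<and> M_qsym (\<alpha> @ [1]) m \<noteq> 0} = {}" using M by auto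
    then show ?thesis using False unfolding shift1_def e_def[symmetric] by auto
  qed
qed

definition colorings_of :: "nat set \<Rightarrow> (nat \<Rightarrow> nat \<Rightarrow> bool) \<Rightarrow> (nat \<Rightarrow> nat) \<Rightarrow> (nat \<Rightarrow> nat) set" where
  "colorings_of V E m = {col. ordered_coloring V E col \<and> (\<forall>i. m i = card {v\<in>V. col v = i})}"

lemma F_graph_card: "F_graph V E m = int (card (colorings_of V E m))"
  unfolding F_graph_def colorings_of_def ..

lemma ordered_coloring_strict_mono_comp:
  fixes f :: "nat \<Rightarrow> nat"
  assumes mono: "strict_mono f" and f0: "f 0 = 0"
  shows "ordered_coloring V E (f \<circ> col) \<longleftrightarrow> ordered_coloring V E col"
proof -
  have zero: "f x = 0 \<longleftrightarrow> x = 0" for x using strict_mono_eq[OF mono, of x 0] f0 by simp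
  then have pos: "Suc 0 \<le> f x \<longleftrightarrow> Suc 0 \<le> x" for x by (metis not_less_eq_eq le_0_eq)
  have below: "{v\<in>V. f (col v) < f (col u)} = {v\<in>V. col v < col u}" for u
    using strict_mono_less[OF mono] by simp
  show ?thesis unfolding ordered_coloring_def comp_def below
    by (simp add: zero pos strict_mono_eq[OF mono])
qed

(* F_\<Gamma> is invariant under order-preserving relabelling of the variables: recolouring
   by a strictly monotone f is a bijection between the relevant colourings. *)
lemma F_graph_reindex:
  fixes f :: "nat \<Rightarrow> nat"
  assumes fin: "finite V" and mono: "strict_mono f" and f0: "f 0 = 0"
    and supp: "\<And>y. m y \<noteq> 0 \<Longrightarrow> y \<in> range f"
  shows "F_graph V E (m \<circ> f) = F_graph V E m"
proof -
  have inj: "inj f" using mono strict_mono_imp_inj_on by blast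
  have count: "card {v\<in>V. f (col v) = f x} = card {v\<in>V. col v = x}" for col x
    using inj by (simp add: inj_eq)
  have "bij_betw (\<lambda>col. f \<circ> col) (colorings_of V E (m \<circ> f)) (colorings_of V E m)"
  proof (rule bij_betw_imageI)
    show "inj_on (\<lambda>col. f \<circ> col) (colorings_of V E (m \<circ> f))"
      using inj by (intro inj_onI) (simp add: fun_eq_iff inj_eq)
    show "(\<lambda>col. f \<circ> col) ` colorings_of V E (m \<circ> f) = colorings_of V E m"
    proof (intro equalityI subsetI)
      fix col' assume "col' \<in> (\<lambda>col. f \<circ> col) ` colorings_of V E (m \<circ> f)"
      then obtain col where col': "col' = f \<circ> col" and col: "col \<in> colorings_of V E (m \<circ> f)"
        by blast
      have "m i = card {v\<in>V. col' v = i}" for i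
      proof (cases "i \<in> range f")
        case True
        then obtain x where i: "i = f x" by blast
        have "m (f x) = card {v\<in>V. col v = x}" using col unfolding colorings_of_def by simp
        then show ?thesis unfolding i col' comp_def count .
      next
        case False
        then have "m i = 0" "{v\<in>V. col' v = i} = {}" using supp unfolding col' by auto
        then show ?thesis by (metis card.empty)
      qed
      then show "col' \<in> colorings_of V E m"
        using col ordered_coloring_strict_mono_comp[OF mono f0] unfolding col' colorings_of_def by auto
    next
      fix col assume col: "col \<in> colorings_of V E m"
      have "col v \<in> range f" for v
      proof (cases "v \<in> V")
        case True
        have "m (col v) = card {v'\<in>V. col v' = col v}"
          using col unfolding colorings_of_def by blast
        moreover have "card {v'\<in>V. col v' = col v} \<noteq> 0" using fin True by auto
        ultimately show ?thesis using supp by metis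
      next
        case False
        then have "col v = 0" using col unfolding colorings_of_def ordered_coloring_def by blast
        then show ?thesis using f0 by (metis rangeI)
      qed
      then have col_eq: "f \<circ> (inv f \<circ> col) = col" by (auto simp: fun_eq_iff f_inv_into_f)
      have "ordered_coloring V E (inv f \<circ> col)"
        using col ordered_coloring_strict_mono_comp[OF mono f0, of V E "inv f \<circ> col"]
        unfolding col_eq colorings_of_def by blast
      moreover have "(m \<circ> f) i = card {v\<in>V. (inv f \<circ> col) v = i}" for i
      proof -
        have "(m \<circ> f) i = card {v\<in>V. (f \<circ> (inv f \<circ> col)) v = f i}"
          using col unfolding col_eq colorings_of_def by simp
        then show ?thesis using count[of "inv f \<circ> col" i] by simp
      qed
      ultimately have "inv f \<circ> col \<in> colorings_of V E (m \<circ> f)"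
        unfolding colorings_of_def by blast
      then show "col \<in> (\<lambda>col. f \<circ> col) ` colorings_of V E (m \<circ> f)"
        using col_eq by (metis image_eqI)
    qed
  qed
  then show ?thesis unfolding F_graph_card by (simp add: bij_betw_same_card)
qed

lemma F_graph_exponents:
  assumes fin: "finite V" and mono: "is_monomial m"
  shows "F_graph V E m = F_graph V E (comp_monomial (exponents m))"
proof -
  define js where "js = sorted_list_of_set {x. m x \<noteq> 0}"
  define k where "k = length js"
  define f where "f x = (if x \<le> k then (0 # js) ! x else sum_list js + x)" for x
  have fin_supp: "finite {x. m x \<noteq> 0}" and m0: "m 0 = 0"
    using mono unfolding is_monomial_def by auto
  have set_js: "set js = {x. m x \<noteq> 0}" unfolding js_def using fin_supp by simp
  have exps: "exponents m = map m js" unfolding exponents_def js_def ..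
  have inc: "sorted_wrt (<) (0 # js)"
    using set_js m0 unfolding js_def by (auto intro: gr0I)
  have le_sum: "(0 # js) ! x \<le> sum_list js" if "x \<le> k" for x
    using that member_le_sum_list[of "(0 # js) ! x" js] unfolding k_def
    by (cases x) auto
  have "strict_mono f"
    unfolding strict_mono_Suc_iff
  proof
    fix x
    consider "Suc x \<le> k" | "x = k" | "k < x" by linarith
    then show "f x < f (Suc x)"
    proof cases
      case 1
      then show ?thesis using sorted_wrt_nth_less[OF inc, of x "Suc x"] unfolding f_def k_def by simp
    next
      case 2
      then show ?thesis using le_sum[of k] unfolding f_def by simp
    qed (simp add: f_def)
  qed
  moreover have "f 0 = 0" unfolding f_def by simp
  moreover have "y \<in> range f" if "m y \<noteq> 0" for y
  proof -
    have "y \<in> set js" using that set_js by simp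
    then obtain j where "j < k" "y = js ! j" unfolding k_def by (auto simp: in_set_conv_nth)
    then have "f (Suc j) = y" unfolding f_def by simp
    then show ?thesis by (metis rangeI)
  qed
  moreover have "m \<circ> f = comp_monomial (exponents m)"
  proof
    fix x
    consider "x = 0" | "1 \<le> x" "x \<le> k" | "k < x" by linarith
    then show "(m \<circ> f) x = comp_monomial (exponents m) x"
    proof cases
      case 1
      then show ?thesis using m0 unfolding f_def comp_monomial_def by simp
    next
      case 2
      then show ?thesis unfolding f_def comp_monomial_def exps k_def by (cases x) auto
    next
      case 3
      have "y < sum_list js + x" if "y \<in> set js" for y
        using member_le_sum_list[OF that] 3 by linarith
      then have "m (sum_list js + x) = 0" using set_js by blast
      then show ?thesis using 3 unfolding f_def comp_monomial_def exps k_def by simp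
    qed
  qed
  ultimately show ?thesis using F_graph_reindex[OF fin, of f m E] by simp
qed

lemma colorings_of_color_count:
  assumes "col \<in> colorings_of V E m" "finite V" "v \<in> V"
  shows "m (col v) \<noteq> 0"
proof -
  have "m (col v) = card {v'\<in>V. col v' = col v}" using assms(1) unfolding colorings_of_def by blast
  moreover have "card {v'\<in>V. col v' = col v} \<noteq> 0" using assms(2,3) by auto
  ultimately show ?thesis by simp
qed

lemma finite_colorings_of:
  assumes fin: "finite V"
  shows "finite (colorings_of V E m)"
proof (cases "colorings_of V E m = {}")
  case False
  then obtain col0 where col0: "col0 \<in> colorings_of V E m" by blast
  have "{y. m y \<noteq> 0} \<subseteq> col0 ` V"
  proof
    fix y assume "y \<in> {y. m y \<noteq> 0}"
    then have "card {v\<in>V. col0 v = y} \<noteq> 0" using col0 unfolding colorings_of_def by auto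
    then show "y \<in> col0 ` V" by (metis (mono_tags, lifting) card.empty empty_Collect_eq image_eqI)
  qed
  then have "colorings_of V E m \<subseteq> {g. \<forall>x. (x \<in> V \<longrightarrow> g x \<in> col0 ` V) \<and> (x \<notin> V \<longrightarrow> g x = 0)}"
    using colorings_of_color_count[OF _ fin] unfolding colorings_of_def ordered_coloring_def
    by (auto 0 3)
  then show ?thesis by (rule finite_subset) (intro finite_set_of_finite_funs fin finite_imageI)
qed simp

lemma is_walk_induced: "set xs \<subseteq> S \<Longrightarrow> is_walk (induced E S) xs \<longleftrightarrow> is_walk E xs"
  unfolding is_walk_def induced_def by (auto simp: subset_iff)

(* Deleting a vertex of an ordered colouring leaves an ordered colouring of the
   induced subgraph: paths there are paths in the whole graph. *)
lemma ordered_coloring_delete: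
  assumes ord: "ordered_coloring V E col"
  shows "ordered_coloring (V - {i}) (induced E (V - {i})) (col(i := 0))"
  unfolding ordered_coloring_def
proof (intro conjI ballI allI impI notI)
  fix u w assume u: "u \<in> V - {i}" and w: "w \<in> V - {i}"
    and same: "u \<noteq> w \<and> (col(i := 0)) u = (col(i := 0)) w"
    and path: "path_through (induced E (V - {i})) {v \<in> V - {i}. (col(i := 0)) v < (col(i := 0)) u} u w"
  have "{v \<in> V - {i}. (col(i := 0)) v < (col(i := 0)) u} = {v \<in> V - {i}. col v < col u}"
    using u by auto
  then obtain ps where ps: "set ps \<subseteq> {v \<in> V - {i}. col v < col u}" "distinct (u # ps @ [w])"
      "is_walk (induced E (V - {i})) (u # ps @ [w])"
    using path unfolding path_through_def by auto
  have "is_walk E (u # ps @ [w])"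
    using ps(1,3) u w is_walk_induced[of "u # ps @ [w]" "V - {i}" E] by auto
  then have "path_through E {v \<in> V. col v < col u} u w"
    using ps(1,2) unfolding path_through_def by blast
  then show False using ord u w same unfolding ordered_coloring_def by auto
qed (use ord in \<open>auto simp: ordered_coloring_def\<close>)

(* Conversely, a vertex i may be added with a colour c above all colours of an
   ordered colouring of the graph minus i: i can never be an inner vertex of a
   forbidden path, and no other vertex shares its colour. *)
lemma ordered_coloring_insert_top:
  assumes ord: "ordered_coloring (V - {i}) (induced E (V - {i})) col" and i: "i \<in> V"
    and below: "\<And>v. v \<in> V - {i} \<Longrightarrow> col v < c" and c: "c \<ge> 1"
  shows "ordered_coloring V E (col(i := c))"
  unfolding ordered_coloring_def
proof (intro conjI ballI allI impI notI)
  fix u w assume u: "u \<in> V" and w: "w \<in> V" and same: "u \<noteq> w \<and> (col(i := c)) u = (col(i := c)) w"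
    and path: "path_through E {v \<in> V. (col(i := c)) v < (col(i := c)) u} u w"
  have ui: "u \<noteq> i" and wi: "w \<noteq> i" using same below u w by (metis fun_upd_apply insert_Diff insert_iff less_irrefl)+
  have "col u < c" using below u ui by blast
  then have "{v \<in> V. (col(i := c)) v < (col(i := c)) u} = {v \<in> V - {i}. col v < col u}"
    using ui by auto
  then obtain ps where ps: "set ps \<subseteq> {v \<in> V - {i}. col v < col u}" "distinct (u # ps @ [w])"
      "is_walk E (u # ps @ [w])"
    using path unfolding path_through_def by auto
  have "is_walk (induced E (V - {i})) (u # ps @ [w])"
    using ps(1,3) u w ui wi is_walk_induced[of "u # ps @ [w]" "V - {i}" E] by auto
  then have "path_through (induced E (V - {i})) {v \<in> V - {i}. col v < col u} u w"
    using ps(1,2) unfolding path_through_def by blast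
  then show False using ord u w ui wi same unfolding ordered_coloring_def by auto
qed (use ord i c in \<open>auto simp: ordered_coloring_def\<close>)

(* Colourings of \<Gamma> with content m correspond bijectively to pairs of a
   vertex i (the one coloured c) and a colouring of \<Gamma> - i with content m(c := 0). *)
context
  fixes m :: "nat \<Rightarrow> nat" and c :: nat
  assumes top_once: "m c = 1" and none_above: "\<And>x. c < x \<Longrightarrow> m x = 0"
begin

lemma deleted_coloring_below_top:
  assumes fin: "finite V" and col: "col \<in> colorings_of (V - {i}) (induced E (V - {i})) (m(c := 0))"
    and v: "v \<in> V - {i}"
  shows "col v < c"
proof -
  have "(m(c := 0)) (col v) \<noteq> 0" using colorings_of_color_count[OF col _ v] fin by blast
  then have "col v \<noteq> c" "m (col v) \<noteq> 0" by (auto split: if_splits)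
  then show ?thesis using none_above by (meson linorder_neqE_nat)
qed

lemma insert_top_colorings:
  assumes fin: "finite V" and i: "i \<in> V" and c: "c \<ge> 1"
    and col: "col \<in> colorings_of (V - {i}) (induced E (V - {i})) (m(c := 0))"
  shows "col(i := c) \<in> colorings_of V E m"
proof -
  have below: "\<And>v. v \<in> V - {i} \<Longrightarrow> col v < c"
    using deleted_coloring_below_top[OF fin col] .
  have ord: "ordered_coloring (V - {i}) (induced E (V - {i})) col"
    and counts: "\<And>x. (m(c := 0)) x = card {v\<in>V - {i}. col v = x}"
    using col unfolding colorings_of_def by auto
  have "m x = card {v\<in>V. (col(i := c)) v = x}" for x
  proof (cases "x = c")
    case True
    have "v = i" if "v \<in> V" "(col(i := c)) v = c" for v
      using that below[of v] by (cases "v = i") auto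
    then have "{v\<in>V. (col(i := c)) v = x} = {i}" using i True by auto
    then show ?thesis using True top_once by simp
  next
    case False
    then have "{v\<in>V. (col(i := c)) v = x} = {v\<in>V - {i}. col v = x}" by auto
    then show ?thesis using counts[of x] False by simp
  qed
  then show ?thesis
    using ordered_coloring_insert_top[OF ord i below c] unfolding colorings_of_def by blast
qed

lemma delete_top_colorings:
  assumes fin: "finite V" and col: "col \<in> colorings_of V E m" and i: "i \<in> V" and ci: "col i = c"
  shows "col(i := 0) \<in> colorings_of (V - {i}) (induced E (V - {i})) (m(c := 0))"
proof -
  have ord: "ordered_coloring V E col" and counts: "\<And>x. m x = card {v\<in>V. col v = x}"
    using col unfolding colorings_of_def by auto
  have "card {v\<in>V. col v = c} = 1" using counts[of c] top_once by simp
  then obtain j where j: "{v\<in>V. col v = c} = {j}" by (rule card_1_singletonE)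
  moreover have "i \<in> {v\<in>V. col v = c}" using i ci by simp
  ultimately have "{v\<in>V. col v = c} = {i}" by simp
  then have not_top: "\<And>v. v \<in> V - {i} \<Longrightarrow> col v \<noteq> c" by blast
  have "(m(c := 0)) x = card {v\<in>V - {i}. (col(i := 0)) v = x}" for x
  proof (cases "x = c")
    case True
    have none: "{v\<in>V - {i}. (col(i := 0)) v = x} = {}" using True not_top by auto
    show ?thesis unfolding none using True by simp
  next
    case False
    have same: "{v\<in>V - {i}. (col(i := 0)) v = x} = {v\<in>V. col v = x}" using False ci by auto
    show ?thesis unfolding same using False counts[of x] by simp
  qed
  then show ?thesis
    using ordered_coloring_delete[OF ord] unfolding colorings_of_def by blast
qed

lemma F_graph_delete_top:
  assumes fin: "finite V" and c: "c \<ge> 1"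
  shows "F_graph V E m = (\<Sum>i\<in>V. F_graph (V - {i}) (induced E (V - {i})) (m(c := 0)))"
proof -
  let ?L = "\<lambda>i. colorings_of (V - {i}) (induced E (V - {i})) (m(c := 0))"
  let ?insert = "\<lambda>(i, col). col(i := c)"
  have "bij_betw ?insert (SIGMA i:V. ?L i) (colorings_of V E m)"
  proof (rule bij_betw_imageI)
    show "inj_on ?insert (SIGMA i:V. ?L i)"
    proof (rule inj_onI, clarify)
      fix i j col col' assume i: "i \<in> V" and j: "j \<in> V" and col: "col \<in> ?L i"
        and col': "col' \<in> ?L j" and eq: "col(i := c) = col'(j := c)"
      have "i = j"
      proof (rule ccontr)
        assume "i \<noteq> j"
        then have "col j < c" using deleted_coloring_below_top[OF fin col] j by blast
        moreover have "col j = c" using fun_cong[OF eq, of j] \<open>i \<noteq> j\<close> by simp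
        ultimately show False by simp
      qed
      moreover have "col i = 0" "col' j = 0"
        using col col' unfolding colorings_of_def ordered_coloring_def by auto
      ultimately show "i = j \<and> col = col'" using eq by (metis fun_upd_triv fun_upd_upd)
    qed
    show "?insert ` (SIGMA i:V. ?L i) = colorings_of V E m"
    proof (intro equalityI subsetI)
      fix col assume "col \<in> ?insert ` (SIGMA i:V. ?L i)"
      then show "col \<in> colorings_of V E m" using insert_top_colorings[OF fin _ c] by auto
    next
      fix col assume col: "col \<in> colorings_of V E m"
      have "card {v\<in>V. col v = c} = 1" using col top_once unfolding colorings_of_def by auto
      then obtain i where "{v\<in>V. col v = c} = {i}" by (rule card_1_singletonE)
      then have i: "i \<in> V" "col i = c" by auto
      then have "(i, col(i := 0)) \<in> (SIGMA i:V. ?L i)"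
        using delete_top_colorings[OF fin col] by blast
      moreover have "col = ?insert (i, col(i := 0))" using i(2) by (simp add: fun_upd_idem)
      ultimately show "col \<in> ?insert ` (SIGMA i:V. ?L i)" by blast
    qed
  qed
  then have "card (colorings_of V E m) = (\<Sum>i\<in>V. card (?L i))"
    using fin finite_colorings_of by (simp add: bij_betw_same_card[symmetric])
  then show ?thesis unfolding F_graph_card by simp
qed

end

lemma exponents_delete_top:
  assumes mono: "is_monomial m" and ne: "{x. m x \<noteq> 0} \<noteq> {}"
  defines "c \<equiv> Max {x. m x \<noteq> 0}"
  shows "exponents m = exponents (m(c := 0)) @ [m c]" and "is_monomial (m(c := 0))"
proof -
  define S where "S = {x. m x \<noteq> 0}"
  have fin: "finite S" using mono unfolding is_monomial_def S_def by simp
  have c_S: "c = Max S" unfolding c_def S_def ..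
  have c: "c \<in> S" "\<And>x. x \<in> S \<Longrightarrow> x \<le> c"
    using Max_in[OF fin] Max_ge[OF fin] ne unfolding c_S S_def by auto
  have supp': "{x. (m(c := 0)) x \<noteq> 0} = S - {c}" unfolding S_def by auto
  define L where "L = sorted_list_of_set (S - {c}) @ [c]"
  have inc: "sorted_wrt (<) L"
    using fin c(2) unfolding L_def by (auto simp: sorted_wrt_append le_neq_implies_less)
  have set_L: "set L = S" using fin c(1) unfolding L_def by auto
  have "sorted_list_of_set (set L) = L"
    using inc by (simp add: sorted_list_of_set.idem_if_sorted_distinct strict_sorted_iff)
  then have sorted: "sorted_list_of_set S = sorted_list_of_set (S - {c}) @ [c]"
    unfolding set_L unfolding L_def .
  have "map m (sorted_list_of_set (S - {c})) = map (m(c := 0)) (sorted_list_of_set (S - {c}))"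
    using fin by (intro map_cong) auto
  then show "exponents m = exponents (m(c := 0)) @ [m c]"
    unfolding exponents_def supp' S_def[symmetric] sorted by simp
  show "is_monomial (m(c := 0))"
    using mono fin unfolding is_monomial_def supp' S_def by auto
qed

(* For connected nonempty \<Gamma>, every monomial occurring in F_\<Gamma> has last exponent 1,
   since the top colour is used only once. *)
lemma exponents_of_connected_coloring:
  assumes conn: "connected_graph V E" and fin: "finite V" and ne: "V \<noteq> {}"
    and col: "col \<in> colorings_of V E m"
  shows "is_monomial m \<and> exponents m \<noteq> [] \<and> last (exponents m) = 1"
proof -
  have ord: "ordered_coloring V E col" and counts: "\<And>x. m x = card {v\<in>V. col v = x}"
    using col unfolding colorings_of_def by auto
  have supp: "{x. m x \<noteq> 0} = col ` V"
    using colorings_of_color_count[OF col fin] counts fin by (force simp: card_eq_0_iff)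
  have "{v\<in>V. col v = 0} = {}" using ord unfolding ordered_coloring_def by fastforce
  then have "m 0 = 0" using counts[of 0] by (metis card.empty)
  then have mono: "is_monomial m" unfolding is_monomial_def supp using fin by simp
  define c where "c = Max {x. m x \<noteq> 0}"
  have "c \<in> col ` V" unfolding c_def supp using fin ne by (simp add: Max_in)
  then obtain u where u: "u \<in> V" "col u = c" by blast
  have "col v \<le> c" if "v \<in> V" for v using fin that unfolding c_def supp by simp
  then have "{v\<in>V. col v = c} = {u}" using top_color_unique[OF conn ord] u by blast
  then have top: "m c = 1" using counts by simp
  have "{x. m x \<noteq> 0} \<noteq> {}" using supp ne by simp
  then have "exponents m = exponents (m(c := 0)) @ [m c]"
    using exponents_delete_top(1)[OF mono] unfolding c_def by blast
  then show ?thesis using mono top by simp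
qed

(* At a monomial
   with composition \<alpha> @ [1] both sides reduce, by the top-colour bijection and
   quasisymmetry, to the sum of the coefficients of the F_{\<Gamma> - i} at the composition
   \<alpha>; at every other monomial both sides vanish. *)
lemma F_graph_recursion:
  assumes fin: "finite V" and ne: "V \<noteq> {}" and conn: "connected_graph V E"
  shows "F_graph V E m = (\<Sum>i\<in>V. shift1 (F_graph (V - {i}) (induced E (V - {i}))) m)"
proof (cases "is_monomial m \<and> exponents m \<noteq> [] \<and> last (exponents m) = 1")
  case True
  then have mono: "is_monomial m" by simp
  have supp_ne: "{x. m x \<noteq> 0} \<noteq> {}"
  proof
    assume "{x. m x \<noteq> 0} = {}"
    then have "exponents m = []" unfolding exponents_def by (simp only: sorted_list_of_set_empty list.map)
    then show False using True by simp
  qed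
  define c where "c = Max {x. m x \<noteq> 0}"
  have split: "exponents m = exponents (m(c := 0)) @ [m c]" and mono': "is_monomial (m(c := 0))"
    using exponents_delete_top[OF mono supp_ne] unfolding c_def by auto
  have top: "m c = 1" using True split by (metis last_snoc)
  have above: "m x = 0" if "c < x" for x
    using that mono supp_ne unfolding c_def is_monomial_def by (metis Max_ge leD mem_Collect_eq)
  have "c \<ge> 1" using mono top unfolding is_monomial_def by (cases c) auto
  then have "F_graph V E m = (\<Sum>i\<in>V. F_graph (V - {i}) (induced E (V - {i})) (m(c := 0)))"
    using F_graph_delete_top[of m c, OF top above fin] by blast
  also have "\<dots> = (\<Sum>i\<in>V. F_graph (V - {i}) (induced E (V - {i})) (comp_monomial (exponents (m(c := 0)))))"
    using F_graph_exponents[OF _ mono'] fin by simp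
  also have "\<dots> = (\<Sum>i\<in>V. shift1 (F_graph (V - {i}) (induced E (V - {i}))) m)"
    using True split by (simp add: shift1_eq)
  finally show ?thesis .
next
  case False
  then have "colorings_of V E m = {}" using exponents_of_connected_coloring[OF conn fin ne] by blast
  then have "F_graph V E m = 0" unfolding F_graph_card by simp
  moreover have "shift1 G m = 0" for G using False by (auto simp: shift1_eq)
  ultimately show ?thesis by simp
qed

(* The theorem for connected graphs on [n]. *)
theorem mainTheorem15:
  fixes n :: nat and E :: "nat \<Rightarrow> nat \<Rightarrow> bool"
  assumes "n \<ge> 1"
    and "simple_graph {1..n} E"
    and "connected_graph {1..n} E"
  shows "F_graph {1..n} E =
           (\<lambda>m. \<Sum>i\<in>{1..n}. shift1 (F_graph ({1..n} - {i}) (induced E ({1..n} - {i}))) m)"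
  using F_graph_recursion[OF finite_atLeastAtMost _ assms(3)] assms(1) by auto

end
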